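(* Let $X$ be a $G$-space with $\mathrm{TC}^{G,\infty}(X)=0$. Then the orbit map $\rho_X\colon X\to X/G$ is nullhomotopic.
   Context: All spaces are well-pointed CW complexes, $G$ a topological group acting cellularly. $PX$ is the path space; $\mathcal{P}_k(X)=\{(\gamma_1,\dots,\gamma_k)\in(PX)^k\mid G\gamma_i(1)=G\gamma_{i+1}(0),\ 1\le i\le k-1\}$, $\pi_k\colon\mathcal{P}_k(X)\to X\times X$, $\pi_k(\gamma_1,\dots,\gamma_k)=(\gamma_1(0),\gamma_k(1))$. $\mathrm{secat}(f)$ (reduced) is the least $n\ge 0$ such that the base has an open cover $U_0,\dots,U_n$ admitting maps $s_i$ with $f\circ s_i\simeq$ inclusion. $\mathrm{TC}^{G,k}(X)=\mathrm{secat}(\pi_k)$, $\mathrm{TC}^{G,\infty}(X)=\min_k\mathrm{TC}^{G,k}(X)$. *)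

theory Defs
  imports "HOL-Analysis.Analysis" "HOL-Algebra.Group"
begin

definition top_group :: "('g, 'm) monoid_scheme \<Rightarrow> 'g topology \<Rightarrow> bool" where
  "top_group G TG \<longleftrightarrow> group G \<and> topspace TG = carrier G \<and>
     continuous_map (prod_topology TG TG) TG (\<lambda>(g, h). g \<otimes>\<^bsub>G\<^esub> h) \<and>
     continuous_map TG TG (\<lambda>g. inv\<^bsub>G\<^esub> g)"

definition G_space :: "('g, 'm) monoid_scheme \<Rightarrow> 'g topology \<Rightarrow> 'a topology \<Rightarrow> ('g \<Rightarrow> 'a \<Rightarrow> 'a) \<Rightarrow> bool" where
  "G_space G TG X act \<longleftrightarrow> top_group G TG \<and>
     continuous_map (prod_topology TG X) X (\<lambda>(g, x). act g x) \<and>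
     (\<forall>x\<in>topspace X. act \<one>\<^bsub>G\<^esub> x = x) \<and>
     (\<forall>g\<in>carrier G. \<forall>h\<in>carrier G. \<forall>x\<in>topspace X. act (g \<otimes>\<^bsub>G\<^esub> h) x = act g (act h x))"

definition G_orbit :: "('g, 'm) monoid_scheme \<Rightarrow> ('g \<Rightarrow> 'a \<Rightarrow> 'a) \<Rightarrow> 'a \<Rightarrow> 'a set" where
  "G_orbit G act x = {act g x | g. g \<in> carrier G}"

text \<open>Orbit space X/G with the quotient topology; points are orbits, the orbit map is G_orbit G act.\<close>
definition orbit_space :: "('g, 'm) monoid_scheme \<Rightarrow> ('g \<Rightarrow> 'a \<Rightarrow> 'a) \<Rightarrow> 'a topology \<Rightarrow> 'a set topology" where
  "orbit_space G act X = topology_generated_by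
     {V. V \<subseteq> G_orbit G act ` topspace X \<and> openin X {x \<in> topspace X. G_orbit G act x \<in> V}}"

text \<open>Free path space PX with the compact-open topology; paths are maps [0,1] -> X
  (made extensional so that each path has a unique representative).\<close>
definition path_space :: "'a topology \<Rightarrow> (real \<Rightarrow> 'a) topology" where
  "path_space X = topology_generated_by
     {{g. pathin X g \<and> g \<in> extensional {0..1} \<and> g ` K \<subseteq> U} | K U.
        compact K \<and> K \<subseteq> {0..1} \<and> openin X U}"

definition multipath_space :: "('g, 'm) monoid_scheme \<Rightarrow> ('g \<Rightarrow> 'a \<Rightarrow> 'a) \<Rightarrow> 'a topology \<Rightarrow> nat
    \<Rightarrow> (nat \<Rightarrow> real \<Rightarrow> 'a) topology" where
  "multipath_space G act X k = subtopology (product_topology (\<lambda>i. path_space X) {..<k})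
     {\<gamma>. \<forall>i. Suc i < k \<longrightarrow> G_orbit G act (\<gamma> i 1) = G_orbit G act (\<gamma> (Suc i) 0)}"

definition multipath_proj :: "nat \<Rightarrow> (nat \<Rightarrow> real \<Rightarrow> 'a) \<Rightarrow> 'a \<times> 'a" where
  "multipath_proj k \<gamma> = (\<gamma> 0 0, \<gamma> (k - 1) 1)"

definition secat_le :: "'e topology \<Rightarrow> 'b topology \<Rightarrow> ('e \<Rightarrow> 'b) \<Rightarrow> nat \<Rightarrow> bool" where
  "secat_le E B f n \<longleftrightarrow> (\<exists>U s. (\<forall>i\<le>n. openin B (U i)) \<and> (\<Union>i\<le>n. U i) = topspace B \<and>
     (\<forall>i\<le>n. continuous_map (subtopology B (U i)) E (s i) \<and>
        homotopic_with (\<lambda>_. True) (subtopology B (U i)) B (f \<circ> s i) id))"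

definition secat :: "'e topology \<Rightarrow> 'b topology \<Rightarrow> ('e \<Rightarrow> 'b) \<Rightarrow> enat" where
  "secat E B f = (if \<exists>n. secat_le E B f n then enat (LEAST n. secat_le E B f n) else \<infinity>)"

definition TC_G :: "('g, 'm) monoid_scheme \<Rightarrow> ('g \<Rightarrow> 'a \<Rightarrow> 'a) \<Rightarrow> 'a topology \<Rightarrow> nat \<Rightarrow> enat" where
  "TC_G G act X k = secat (multipath_space G act X k) (prod_topology X X) (multipath_proj k)"

definition TC_G_inf :: "('g, 'm) monoid_scheme \<Rightarrow> ('g \<Rightarrow> 'a \<Rightarrow> 'a) \<Rightarrow> 'a topology \<Rightarrow> enat" where
  "TC_G_inf G act X = (INF k\<in>{1..}. TC_G G act X k)"

end

theory Submission
  imports Defs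
begin

text \<open>If \<open>\<pi>\<^sub>k\<close> has a global homotopy section \<open>\<sigma>\<close>, fix a base point \<open>x\<^sub>0\<close> and look at the
  multipaths \<open>\<sigma>(x\<^sub>0, x)\<close>. Sliding along the \<open>i\<close>-th path homotopes \<open>\<rho>\<close> of its start point to
  \<open>\<rho>\<close> of its end point, and consecutive end and start points lie in the same orbit, so the map
  \<open>x \<mapsto> \<rho>(start of \<sigma>(x\<^sub>0, x))\<close> is homotopic to \<open>x \<mapsto> \<rho>(end of \<sigma>(x\<^sub>0, x))\<close>. Since
  \<open>\<pi>\<^sub>k \<circ> \<sigma> \<simeq> id\<close>, the former is homotopic to the constant \<open>\<rho>(x\<^sub>0)\<close> and the latter to \<open>\<rho>\<close>.\<close>

lemma topspace_path_space:
  "topspace (path_space X) = {g. pathin X g \<and> g \<in> extensional {0..1}}"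
proof -
  let ?S = "{{g. pathin X g \<and> g \<in> extensional {0..1} \<and> g ` K \<subseteq> U} | K U.
              compact K \<and> K \<subseteq> {0..1} \<and> openin X U}"
  have "{g. pathin X g \<and> g \<in> extensional {0..1} \<and> g ` {} \<subseteq> topspace X} \<in> ?S"
    by blast
  then have "\<Union> ?S = {g. pathin X g \<and> g \<in> extensional {0..1}}"
    by (intro equalityI) blast+
  then show ?thesis
    unfolding path_space_def topology_generated_by_topspace .
qed

lemma continuous_map_path_eval:
  "continuous_map (prod_topology (top_of_set {0..1}) (path_space X)) X (\<lambda>(t, g). g t)"
proof -
  let ?T = "prod_topology (top_of_set {0..1}) (path_space X)"
  show ?thesis
    unfolding continuous_map
  proof (intro conjI allI impI)
    show "(\<lambda>(t, g). g t) ` topspace ?T \<subseteq> topspace X"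
      by (force simp: topspace_path_space pathin_def continuous_map_def Pi_iff)
  next
    fix U assume U: "openin X U"
    let ?W = "{z \<in> topspace ?T. (case z of (t, g) \<Rightarrow> g t) \<in> U}"
    show "openin ?T ?W"
      unfolding openin_subopen[of ?T ?W]
    proof (intro ballI)
      fix z assume z: "z \<in> ?W"
      obtain t0 g0 where z0: "z = (t0, g0)"
        by fastforce
      have t0: "t0 \<in> {0..1}" and g0U: "g0 t0 \<in> U"
        and g0: "pathin X g0" "g0 \<in> extensional {0..1}"
        using z z0 by (auto simp: topspace_path_space)
      have "openin (top_of_set {0..1}) {t \<in> topspace (top_of_set {0..1}). g0 t \<in> U}"
        using g0(1) U unfolding pathin_def continuous_map by blast
      then have "openin (top_of_set {0..1}) {t \<in> {0..1}. g0 t \<in> U}"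
        by simp
      then obtain e where e: "e > 0" "\<And>t. t \<in> {0..1} \<Longrightarrow> dist t t0 < e \<Longrightarrow> g0 t \<in> U"
        using t0 g0U unfolding openin_euclidean_subtopology_iff by blast
      \<comment> \<open>A compact neighbourhood \<open>K\<close> of \<open>t\<^sub>0\<close> mapped into \<open>U\<close> gives a basic open set of paths.\<close>
      define K where "K = cball t0 (e/2) \<inter> {0..1::real}"
      have K: "compact K" "g0 ` K \<subseteq> U"
        using e by (auto simp: K_def dist_commute compact_Int_closed)
      let ?A = "ball t0 (e/2) \<inter> {0..1::real}"
      let ?B = "{g. pathin X g \<and> g \<in> extensional {0..1} \<and> g ` K \<subseteq> U}"
      have "openin (top_of_set {0..1}) ?A"
        using openin_open_Int[of "ball t0 (e/2)" "{0..1::real}"] by (simp add: Int_commute)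
      moreover have "openin (path_space X) ?B"
        unfolding path_space_def
        by (rule topology_generated_by_Basis) (use K U in \<open>auto simp: K_def\<close>)
      ultimately have "openin ?T (?A \<times> ?B)"
        by (simp add: openin_prod_Times_iff)
      moreover have "z \<in> ?A \<times> ?B"
        using z0 t0 g0 K e by auto
      moreover have "?A \<times> ?B \<subseteq> ?W"
      proof
        fix w assume "w \<in> ?A \<times> ?B"
        then obtain t g where w: "w = (t, g)" "t \<in> ?A" "g \<in> ?B"
          by blast
        then have "g t \<in> U"
          by (auto simp: K_def)
        moreover have "w \<in> topspace ?T"
          using w by (auto simp: topspace_path_space)
        ultimately show "w \<in> ?W"
          using w by auto
      qed
      ultimately show "\<exists>T. openin ?T T \<and> z \<in> T \<and> T \<subseteq> ?W"
        by blast
    qed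
  qed
qed

lemma continuous_map_orbit_map:
  "continuous_map X (orbit_space G act X) (G_orbit G act)"
  unfolding orbit_space_def
proof (rule continuous_on_generated_topo)
  fix U
  assume "U \<in> {V. V \<subseteq> G_orbit G act ` topspace X \<and> openin X {x \<in> topspace X. G_orbit G act x \<in> V}}"
  moreover have "G_orbit G act -` U \<inter> topspace X = {x \<in> topspace X. G_orbit G act x \<in> U}"
    by blast
  ultimately show "openin X (G_orbit G act -` U \<inter> topspace X)"
    by simp
next
  have "{x \<in> topspace X. G_orbit G act x \<in> G_orbit G act ` topspace X} = topspace X"
    by blast
  then show "G_orbit G act ` topspace X \<subseteq>
      \<Union> {V. V \<subseteq> G_orbit G act ` topspace X \<and> openin X {x \<in> topspace X. G_orbit G act x \<in> V}}"
    by (intro Union_upper) simp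
qed

lemma homotopic_path_family_endpoints:
  assumes "continuous_map Y (path_space X) F"
  shows "homotopic_with (\<lambda>_. True) Y X (\<lambda>y. F y 0) (\<lambda>y. F y 1)"
proof -
  have "continuous_map (prod_topology (top_of_set {0..1}) Y)
          (prod_topology (top_of_set {0..1}) (path_space X)) (\<lambda>(t, y). (t, F y))"
    using continuous_map_compose[OF continuous_map_snd assms]
    by (simp add: continuous_map_paired case_prod_unfold continuous_map_fst o_def)
  from continuous_map_compose[OF this continuous_map_path_eval]
  have "continuous_map (prod_topology (top_of_set {0..1}) Y) X (\<lambda>(t, y). F y t)"
    by (simp add: o_def case_prod_unfold)
  then show ?thesis
    unfolding homotopic_with_def by (intro exI[of _ "\<lambda>(t, y). F y t"]) auto
qed

lemma homotopic_orbits_multipath_endpoints: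
  assumes F: "continuous_map Y (multipath_space G act X k) F" and "k \<ge> 1"
  shows "homotopic_with (\<lambda>_. True) Y (orbit_space G act X)
           (\<lambda>y. G_orbit G act (F y 0 0)) (\<lambda>y. G_orbit G act (F y (k - 1) 1))"
proof -
  let ?\<rho> = "G_orbit G act" and ?O = "orbit_space G act X"
  have segment: "homotopic_with (\<lambda>_. True) Y ?O (\<lambda>y. ?\<rho> (F y i 0)) (\<lambda>y. ?\<rho> (F y i 1))"
    if "i < k" for i
  proof -
    have "continuous_map Y (product_topology (\<lambda>i. path_space X) {..<k}) F"
      using F by (simp add: multipath_space_def continuous_map_in_subtopology)
    then have "continuous_map Y (path_space X) (\<lambda>y. F y i)"
      using that by (simp add: continuous_map_componentwise)
    from homotopic_with_compose_continuous_map_left[where q = "\<lambda>_. True",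
        OF homotopic_path_family_endpoints[OF this] continuous_map_orbit_map[of X G act]]
    show ?thesis
      by (simp add: o_def)
  qed
  have glue: "?\<rho> (F y i 1) = ?\<rho> (F y (Suc i) 0)" if "y \<in> topspace Y" "Suc i < k" for y i
    using continuous_map_image_subset_topspace[OF F] that
    by (auto simp: multipath_space_def)
  have "homotopic_with (\<lambda>_. True) Y ?O (\<lambda>y. ?\<rho> (F y 0 0)) (\<lambda>y. ?\<rho> (F y i 1))"
    if "i < k" for i
    using that
  proof (induction i)
    case 0
    then show ?case by (rule segment)
  next
    case (Suc i)
    then have "homotopic_with (\<lambda>_. True) Y ?O (\<lambda>y. ?\<rho> (F y 0 0)) (\<lambda>y. ?\<rho> (F y (Suc i) 0))"
      using glue by (intro homotopic_with_eq[OF Suc.IH]) auto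
    then show ?case
      using homotopic_with_trans segment[OF Suc.prems] by blast
  qed
  then show ?thesis
    using \<open>k \<ge> 1\<close> by simp
qed

lemma orbit_map_nullhomotopic_if_homotopy_section:
  assumes \<sigma>_cont: "continuous_map (prod_topology X X) (multipath_space G act X k) \<sigma>"
    and \<sigma>_section: "homotopic_with (\<lambda>_. True) (prod_topology X X) (prod_topology X X)
                    (multipath_proj k \<circ> \<sigma>) id"
    and "k \<ge> 1"
  shows "\<exists>c. homotopic_with (\<lambda>_. True) X (orbit_space G act X) (G_orbit G act) (\<lambda>_. c)"
proof (cases "topspace X = {}")
  case True
  then show ?thesis
    by (intro exI homotopic_with_equal continuous_map_orbit_map) auto
next
  case False
  let ?\<rho> = "G_orbit G act" and ?O = "orbit_space G act X"
  obtain x0 where x0: "x0 \<in> topspace X"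
    using False by blast
  have slice: "continuous_map X (prod_topology X X) (Pair x0)"
    using x0 by (intro continuous_intros) auto
  have "homotopic_with (\<lambda>_. True) X (prod_topology X X)
          (multipath_proj k \<circ> \<sigma> \<circ> Pair x0) (id \<circ> Pair x0)"
    by (rule homotopic_with_compose_continuous_map_right[OF \<sigma>_section slice]) auto
  then have "homotopic_with (\<lambda>_. True) X ?O (?\<rho> \<circ> fst \<circ> (multipath_proj k \<circ> \<sigma> \<circ> Pair x0))
               (?\<rho> \<circ> fst \<circ> (id \<circ> Pair x0))"
        and "homotopic_with (\<lambda>_. True) X ?O (?\<rho> \<circ> snd \<circ> (multipath_proj k \<circ> \<sigma> \<circ> Pair x0))
               (?\<rho> \<circ> snd \<circ> (id \<circ> Pair x0))"
    by (auto intro!: homotopic_with_compose_continuous_map_left continuous_map_compose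
        continuous_map_fst continuous_map_snd continuous_map_orbit_map)
  then have start: "homotopic_with (\<lambda>_. True) X ?O (\<lambda>x. ?\<rho> (\<sigma> (x0, x) 0 0)) (\<lambda>_. ?\<rho> x0)"
        and "end": "homotopic_with (\<lambda>_. True) X ?O (\<lambda>x. ?\<rho> (\<sigma> (x0, x) (k - 1) 1)) ?\<rho>"
    by (simp_all add: o_def multipath_proj_def)
  have "homotopic_with (\<lambda>_. True) X ?O
          (\<lambda>x. ?\<rho> (\<sigma> (x0, x) 0 0)) (\<lambda>x. ?\<rho> (\<sigma> (x0, x) (k - 1) 1))"
    using homotopic_orbits_multipath_endpoints[OF continuous_map_compose[OF slice \<sigma>_cont]
        \<open>k \<ge> 1\<close>]
    by (simp add: o_def)
  then show ?thesis
    using homotopic_with_trans[OF homotopic_with_symD[OF "end"]]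
      homotopic_with_trans[OF _ start] homotopic_with_symD by blast
qed

lemma secat_eq_0_imp_homotopy_section:
  assumes "secat E B f = 0"
  obtains s where "continuous_map B E s" "homotopic_with (\<lambda>_. True) B B (f \<circ> s) id"
proof -
  have "secat_le E B f 0"
    using assms LeastI[of "secat_le E B f"]
    by (auto simp: secat_def zero_enat_def split: if_splits)
  then show ?thesis
    using that by (auto simp: secat_le_def subtopology_topspace)
qed

lemma TC_G_inf_eq_0_imp_TC_G_eq_0:
  assumes "TC_G_inf G act X = 0"
  obtains k where "k \<ge> 1" "TC_G G act X k = 0"
proof (rule ccontr)
  assume "\<not> thesis"
  then have "\<forall>k\<in>{1..}. 1 \<le> TC_G G act X k"
    using that by (metis atLeast_iff ileI1 not_gr_zero one_eSuc)
  then have "1 \<le> TC_G_inf G act X"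
    unfolding TC_G_inf_def by (simp add: le_INF_iff)
  then show False
    using assms by simp
qed

theorem mainTheorem6:
  fixes G :: "('g, 'm) monoid_scheme" and TG :: "'g topology"
    and X :: "'a topology" and act :: "'g \<Rightarrow> 'a \<Rightarrow> 'a"
  assumes "G_space G TG X act"
    and "TC_G_inf G act X = 0"
  shows "\<exists>c. homotopic_with (\<lambda>_. True) X (orbit_space G act X) (G_orbit G act) (\<lambda>_. c)"
proof -
  obtain k where "k \<ge> 1" and "TC_G G act X k = 0"
    using TC_G_inf_eq_0_imp_TC_G_eq_0 assms(2) .
  from \<open>TC_G G act X k = 0\<close> obtain \<sigma>
    where "continuous_map (prod_topology X X) (multipath_space G act X k) \<sigma>"
      and "homotopic_with (\<lambda>_. True) (prod_topology X X) (prod_topology X X) (multipath_proj k \<circ> \<sigma>) id"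
    unfolding TC_G_def by (rule secat_eq_0_imp_homotopy_section)
  then show ?thesis
    using orbit_map_nullhomotopic_if_homotopy_section \<open>k \<ge> 1\<close> by blast
qed

end
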